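(* Let $\mathbf P=(P,\leq,{}',0,1)$ be an orthogonal lub-complete poset. Then the following conditions are equivalent: (i) $\mathbf P$ is a paraorthomodular poset. (ii) For all $x,y\in P$, $x\rightarrow_K y=1$ implies $x\leq y$. (iii) For all $x,y\in P$, $x\rightarrow_N y=1$ implies $x\leq y$.
   Context: $(P,\leq,{}',0,1)$ is a bounded poset with an antitone involution ${}'$; orthogonal means $x\leq y'$ implies $x\vee y$ exists; lub-complete means for every lower bound $x$ of a finite subset $M$ there is a maximal lower bound of $M$ above $x$; paraorthomodular means $x\leq y$ and $x'\wedge y=0$ together imply $x=y$. For $A\subseteq P$, $L(A)$, $U(A)$ are the lower and upper cones, $\mathrm{Max}\,A$, $\mathrm{Min}\,A$ the sets of maximal and minimal elements; joins/meets with sets are elementwise. Kalmbach implication: $x\rightarrow_K y:=\mathrm{Max}\,L(x',y)\vee \mathrm{Max}\,L(x',y')\vee (x\wedge \mathrm{Min}\,U(x',y))$; non-tolens implication: $x\rightarrow_N y:=y'\rightarrow_K x'$. "$=1$" means equal to $\{1\}$. *)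

theory Defs
  imports Main
begin

text \<open>A bounded poset is a type of class {order_bot,order_top} (0 = bot, 1 = top);
  the antitone involution is a function cmp.\<close>

definition antitone_involution :: "('a::order \<Rightarrow> 'a) \<Rightarrow> bool" where
  "antitone_involution cmp \<longleftrightarrow> (\<forall>x y. x \<le> y \<longrightarrow> cmp y \<le> cmp x) \<and> (\<forall>x. cmp (cmp x) = x)"

definition LC :: "'a::order set \<Rightarrow> 'a set" where
  "LC A = {x. \<forall>a\<in>A. x \<le> a}"

definition UC :: "'a::order set \<Rightarrow> 'a set" where
  "UC A = {x. \<forall>a\<in>A. a \<le> x}"

definition MaxS :: "'a::order set \<Rightarrow> 'a set" where
  "MaxS A = {x\<in>A. \<forall>y\<in>A. x \<le> y \<longrightarrow> x = y}"

definition MinS :: "'a::order set \<Rightarrow> 'a set" where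
  "MinS A = {x\<in>A. \<forall>y\<in>A. y \<le> x \<longrightarrow> x = y}"

definition is_join :: "'a::order \<Rightarrow> 'a \<Rightarrow> 'a \<Rightarrow> bool" where
  "is_join x y s \<longleftrightarrow> x \<le> s \<and> y \<le> s \<and> (\<forall>z. x \<le> z \<and> y \<le> z \<longrightarrow> s \<le> z)"

definition is_meet :: "'a::order \<Rightarrow> 'a \<Rightarrow> 'a \<Rightarrow> bool" where
  "is_meet x y m \<longleftrightarrow> m \<le> x \<and> m \<le> y \<and> (\<forall>z. z \<le> x \<and> z \<le> y \<longrightarrow> z \<le> m)"

definition orthogonal :: "('a::order \<Rightarrow> 'a) \<Rightarrow> bool" where
  "orthogonal cmp \<longleftrightarrow> (\<forall>x y. x \<le> cmp y \<longrightarrow> (\<exists>s. is_join x y s))"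

definition lub_complete :: "'a::order itself \<Rightarrow> bool" where
  "lub_complete _ \<longleftrightarrow> (\<forall>(M::'a set) x. finite M \<and> x \<in> LC M \<longrightarrow> (\<exists>y\<in>MaxS (LC M). x \<le> y))"

definition paraorthomodular :: "('a::{order_bot,order_top} \<Rightarrow> 'a) \<Rightarrow> bool" where
  "paraorthomodular cmp \<longleftrightarrow> (\<forall>x y. x \<le> y \<and> is_meet (cmp x) y bot \<longrightarrow> x = y)"

text \<open>Elementwise joins/meets of sets (only existing joins/meets are collected;
  in orthogonal lub-complete posets all joins occurring below exist).\<close>
definition set_join :: "'a::order set \<Rightarrow> 'a set \<Rightarrow> 'a set" where
  "set_join A B = {s. \<exists>a\<in>A. \<exists>b\<in>B. is_join a b s}"

definition elem_meet :: "'a::order \<Rightarrow> 'a set \<Rightarrow> 'a set" where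
  "elem_meet x B = {m. \<exists>b\<in>B. is_meet x b m}"

definition impK :: "('a::order \<Rightarrow> 'a) \<Rightarrow> 'a \<Rightarrow> 'a \<Rightarrow> 'a set" where
  "impK cmp x y = set_join (set_join (MaxS (LC {cmp x, y})) (MaxS (LC {cmp x, cmp y})))
                     (elem_meet x (MinS (UC {cmp x, y})))"

definition impN :: "('a::order \<Rightarrow> 'a) \<Rightarrow> 'a \<Rightarrow> 'a \<Rightarrow> 'a set" where
  "impN cmp x y = impK cmp (cmp y) (cmp x)"

end

theory Submission
  imports Defs
begin

(* In an orthogonal lub-complete poset every join and meet occurring in x \<rightarrow>K y exists,
   so x \<rightarrow>K y is never empty. Suppose x \<rightarrow>K y = 1 and let t = a \<or> b with a \<in> Max L(x',y)
   and b \<in> Max L(x',y'). Every u \<in> Min U(x',y) lies above t \<or> (x \<and> u) = 1, so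
   Min U(x',y) = {1}; dually Max L(x,y') = {0}, i.e. x \<and> y' = 0. Taking u = 1 gives t \<or> x = 1,
   and since t \<le> x' paraorthomodularity yields t = x'. As a \<le> y, every common lower bound of
   b' and y' lies below t' = x and y', so b' \<and> y' = 0 and paraorthomodularity gives b = y',
   whence y' \<le> x'. Conversely, if x \<le> y and x' \<and> y = 0, then Max L(y',x') = {y'} and
   Min U(y',x) = {1}, so y \<rightarrow>K x = y' \<or> y = 1. Finally x \<rightarrow>N y = y' \<rightarrow>K x', and y' \<le> x'
   iff x \<le> y. *)

lemma is_join_unique: "is_join x y s \<Longrightarrow> is_join x y s' \<Longrightarrow> s = s'"
  unfolding is_join_def by (blast intro: order.antisym)

lemma is_join_le_iff: "is_join x y s \<Longrightarrow> s \<le> z \<longleftrightarrow> x \<le> z \<and> y \<le> z"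
  unfolding is_join_def by (blast intro: order.trans)

lemma is_join_of_le: "x \<le> y \<Longrightarrow> is_join x y y"
  unfolding is_join_def by simp

lemma is_meet_top_iff: "is_meet (x::'a::order_top) top m \<longleftrightarrow> m = x"
  unfolding is_meet_def by (auto intro: order.antisym)

lemma is_meet_bot_iff: "is_meet (x::'a::order_bot) y bot \<longleftrightarrow> (\<forall>z. z \<le> x \<longrightarrow> z \<le> y \<longrightarrow> z = bot)"
  unfolding is_meet_def by (auto simp: bot_unique)

lemma MaxS_LC_pair_of_le: "x \<le> y \<Longrightarrow> MaxS (LC {x, y}) = {x}"
  unfolding MaxS_def LC_def by (auto intro: order.antisym)

lemma paraorthomodularD:
  fixes cmp :: "'a::{order_bot,order_top} \<Rightarrow> 'a"
  shows "paraorthomodular cmp \<Longrightarrow> x \<le> y \<Longrightarrow> is_meet (cmp x) y bot \<Longrightarrow> x = y"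
  unfolding paraorthomodular_def by blast

lemma mem_impK_iff:
  "s \<in> impK cmp x y \<longleftrightarrow>
    (\<exists>a b t u m. a \<in> MaxS (LC {cmp x, y}) \<and> b \<in> MaxS (LC {cmp x, cmp y}) \<and> is_join a b t
      \<and> u \<in> MinS (UC {cmp x, y}) \<and> is_meet x u m \<and> is_join t m s)"
  unfolding impK_def set_join_def elem_meet_def by blast

locale involution_poset =
  fixes cmp :: "'a::{order_bot,order_top} \<Rightarrow> 'a"
  assumes antitone_involution: "antitone_involution cmp"
begin

lemma cmp_antimono: "x \<le> y \<Longrightarrow> cmp y \<le> cmp x"
  using antitone_involution unfolding antitone_involution_def by blast

lemma cmp_cmp [simp]: "cmp (cmp x) = x"
  using antitone_involution unfolding antitone_involution_def by blast

lemma cmp_le_cmp_iff [simp]: "cmp x \<le> cmp y \<longleftrightarrow> y \<le> x"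
  by (metis cmp_antimono cmp_cmp)

lemma le_cmp_iff: "x \<le> cmp y \<longleftrightarrow> y \<le> cmp x"
  by (metis cmp_le_cmp_iff cmp_cmp)

lemma cmp_le_iff: "cmp x \<le> y \<longleftrightarrow> cmp y \<le> x"
  by (metis cmp_le_cmp_iff cmp_cmp)

lemma cmp_eq_iff [simp]: "cmp x = cmp y \<longleftrightarrow> x = y"
  by (metis cmp_cmp)

lemma cmp_bot [simp]: "cmp bot = top"
  by (metis cmp_le_cmp_iff top.extremum_uniqueI bot_least cmp_cmp)

lemma cmp_top [simp]: "cmp top = bot"
  by (metis cmp_bot cmp_cmp)

lemma cmp_eq_top_iff: "cmp x = top \<longleftrightarrow> x = bot"
  by (metis cmp_bot cmp_eq_iff)

lemma is_join_iff_is_meet_cmp: "is_join x y s \<longleftrightarrow> is_meet (cmp x) (cmp y) (cmp s)"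
  unfolding is_join_def is_meet_def by (metis cmp_le_cmp_iff cmp_cmp)

lemma UC_image_cmp: "UC (cmp ` A) = cmp ` LC A"
proof (intro equalityI subsetI)
  fix u assume "u \<in> UC (cmp ` A)"
  then have "cmp u \<in> LC A"
    by (auto simp: UC_def LC_def cmp_le_iff)
  then show "u \<in> cmp ` LC A"
    by (metis cmp_cmp image_eqI)
qed (auto simp: UC_def LC_def)

lemma MinS_image_cmp: "MinS (cmp ` A) = cmp ` MaxS A"
  unfolding MinS_def MaxS_def by auto

lemma MinS_UC_pair: "MinS (UC {cmp x, y}) = cmp ` MaxS (LC {x, cmp y})"
  using UC_image_cmp[of "{x, cmp y}"] MinS_image_cmp by simp

lemma UC_pair_eq_top_if_is_meet_bot:
  assumes "is_meet (cmp x) y bot"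
  shows "UC {x, cmp y} = {top}"
proof (intro equalityI subsetI)
  fix u assume "u \<in> UC {x, cmp y}"
  then have "cmp u \<le> cmp x" "cmp u \<le> y"
    by (auto simp: UC_def cmp_le_iff)
  with assms have "cmp u = bot"
    by (simp add: is_meet_bot_iff)
  then show "u \<in> {top}"
    by (metis cmp_bot cmp_cmp singletonI)
qed (simp add: UC_def)

lemma impN_eq_top_imp_le_iff:
  "(\<forall>x y. impN cmp x y = {top} \<longrightarrow> x \<le> y) \<longleftrightarrow> (\<forall>x y. impK cmp x y = {top} \<longrightarrow> x \<le> y)"
  unfolding impN_def by (metis cmp_cmp cmp_le_cmp_iff)

end

locale orthogonal_lub_complete_poset = involution_poset cmp
  for cmp :: "'a::{order_bot,order_top} \<Rightarrow> 'a" +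
  assumes orthogonal: "orthogonal cmp"
    and lub_complete: "lub_complete TYPE('a)"
begin

lemma ex_is_join: "x \<le> cmp y \<Longrightarrow> \<exists>s. is_join x y s"
  using orthogonal unfolding orthogonal_def by blast

lemma ex_is_meet: "cmp x \<le> y \<Longrightarrow> \<exists>m. is_meet x y m"
  using ex_is_join[of "cmp x" "cmp y"] by (auto simp: is_join_iff_is_meet_cmp)

lemma obtain_MaxS_LC_pair_above:
  fixes x y z :: 'a
  assumes "z \<le> x" "z \<le> y"
  obtains w where "w \<in> MaxS (LC {x, y})" "z \<le> w"
proof -
  have "finite {x, y}" "z \<in> LC {x, y}"
    using assms by (simp_all add: LC_def)
  with lub_complete that show thesis
    unfolding lub_complete_def by blast
qed

lemma MaxS_LC_pair_not_empty: "MaxS (LC {x, y :: 'a}) \<noteq> {}"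
  using obtain_MaxS_LC_pair_above[OF bot_least bot_least] by blast

lemma MinS_UC_pair_not_empty: "MinS (UC {cmp x, y}) \<noteq> {}"
  by (simp add: MinS_UC_pair MaxS_LC_pair_not_empty)

lemma is_meet_bot_if_MinS_UC_top:
  assumes "MinS (UC {cmp x, y}) \<subseteq> {top}"
  shows "is_meet x (cmp y) bot"
  unfolding is_meet_bot_iff
proof (intro allI impI)
  fix z assume "z \<le> x" "z \<le> cmp y"
  then obtain w where w: "w \<in> MaxS (LC {x, cmp y})" "z \<le> w"
    by (rule obtain_MaxS_LC_pair_above)
  then have "cmp w \<in> MinS (UC {cmp x, y})"
    by (simp add: MinS_UC_pair)
  with assms have "cmp w = top"
    by blast
  with w(2) show "z = bot"
    by (simp add: cmp_eq_top_iff bot_unique)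
qed

lemma obtain_is_join_MaxS_LC:
  obtains a b t where "a \<in> MaxS (LC {cmp x, y})" "b \<in> MaxS (LC {cmp x, cmp y})" "is_join a b t"
proof -
  obtain a where a: "a \<in> MaxS (LC {cmp x, y})"
    using MaxS_LC_pair_not_empty by blast
  obtain b where b: "b \<in> MaxS (LC {cmp x, cmp y})"
    using MaxS_LC_pair_not_empty by blast
  have "a \<le> y" "b \<le> cmp y"
    using a b by (auto simp: MaxS_def LC_def)
  then have "b \<le> cmp a"
    by (meson cmp_antimono order.trans)
  then have "a \<le> cmp b"
    using le_cmp_iff by blast
  then obtain t where "is_join a b t"
    using ex_is_join by blast
  with a b show thesis
    by (rule that)
qed

lemma is_join_MaxS_LC_le:
  assumes "a \<in> MaxS (LC {cmp x, y})" "b \<in> MaxS (LC {cmp x, cmp y})" "is_join a b t"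
  shows "t \<le> cmp x"
proof -
  have "a \<le> cmp x" "b \<le> cmp x"
    using assms(1,2) by (auto simp: MaxS_def LC_def)
  with assms(3) show ?thesis
    by (simp add: is_join_le_iff)
qed

lemma obtain_mem_impK:
  assumes a: "a \<in> MaxS (LC {cmp x, y})" and b: "b \<in> MaxS (LC {cmp x, cmp y})"
    and t: "is_join a b t" and u: "u \<in> MinS (UC {cmp x, y})"
  obtains m s where "is_meet x u m" "is_join t m s" "s \<in> impK cmp x y"
proof -
  have "cmp x \<le> u"
    using u by (auto simp: MinS_def UC_def)
  then obtain m where m: "is_meet x u m"
    using ex_is_meet by blast
  have "t \<le> cmp m"
    using is_join_MaxS_LC_le[OF a b t] m by (auto simp: is_meet_def intro: order.trans)
  then obtain s where s: "is_join t m s"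
    using ex_is_join by blast
  have "s \<in> impK cmp x y"
    unfolding mem_impK_iff using a b t u m s by blast
  with m s show thesis
    by (rule that)
qed

lemma impK_not_empty: "impK cmp x y \<noteq> {}"
proof -
  obtain a b t where "a \<in> MaxS (LC {cmp x, y})" "b \<in> MaxS (LC {cmp x, cmp y})" "is_join a b t"
    by (rule obtain_is_join_MaxS_LC)
  moreover obtain u where "u \<in> MinS (UC {cmp x, y})"
    using MinS_UC_pair_not_empty by blast
  ultimately show ?thesis
    by (rule obtain_mem_impK) blast
qed

lemma MinS_UC_subset_top_if_impK:
  assumes K: "impK cmp x y \<subseteq> {top}"
  shows "MinS (UC {cmp x, y}) \<subseteq> {top}"
proof
  fix u assume u: "u \<in> MinS (UC {cmp x, y})"
  obtain a b t where a: "a \<in> MaxS (LC {cmp x, y})" and b: "b \<in> MaxS (LC {cmp x, cmp y})"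
    and t: "is_join a b t"
    by (rule obtain_is_join_MaxS_LC)
  obtain m s where m: "is_meet x u m" and s: "is_join t m s" and "s \<in> impK cmp x y"
    using a b t u by (rule obtain_mem_impK)
  with K have "s = top"
    by blast
  moreover have "t \<le> u"
    using is_join_MaxS_LC_le[OF a b t] u by (auto simp: MinS_def UC_def intro: order.trans)
  then have "s \<le> u"
    using m s by (simp add: is_join_le_iff is_meet_def)
  ultimately show "u \<in> {top}"
    by (simp add: top_unique)
qed

lemma le_if_impK_eq_top:
  assumes pom: "paraorthomodular cmp" and K: "impK cmp x y = {top}"
  shows "x \<le> y"
proof -
  obtain a b t where a: "a \<in> MaxS (LC {cmp x, y})" and b: "b \<in> MaxS (LC {cmp x, cmp y})"
    and t: "is_join a b t"
    by (rule obtain_is_join_MaxS_LC)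
  have t_le: "t \<le> cmp x"
    using a b t by (rule is_join_MaxS_LC_le)
  have MinS_top: "MinS (UC {cmp x, y}) = {top}"
    using MinS_UC_subset_top_if_impK MinS_UC_pair_not_empty K by blast
  then have x_meet_cmp_y: "is_meet x (cmp y) bot"
    by (simp add: is_meet_bot_if_MinS_UC_top)
  obtain m s where "is_meet x top m" "is_join t m s" "s \<in> impK cmp x y"
    using a b t MinS_top by (auto elim: obtain_mem_impK)
  with K have "is_join t x top"
    by (simp add: is_meet_top_iff)
  then have "is_meet (cmp t) (cmp x) bot"
    by (simp add: is_join_iff_is_meet_cmp)
  with pom t_le have t_eq: "t = cmp x"
    by (rule paraorthomodularD)
  have "is_meet (cmp b) (cmp y) bot"
    unfolding is_meet_bot_iff
  proof (intro allI impI)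
    fix z assume z_b: "z \<le> cmp b" and z_y: "z \<le> cmp y"
    have "a \<le> cmp z"
      using a z_y by (auto simp: MaxS_def LC_def le_cmp_iff intro: order.trans)
    with z_b have "t \<le> cmp z"
      using t by (simp add: is_join_le_iff le_cmp_iff)
    then have "z \<le> x"
      by (simp add: t_eq le_cmp_iff)
    with z_y x_meet_cmp_y show "z = bot"
      by (simp add: is_meet_bot_iff)
  qed
  moreover have "b \<le> cmp y" "b \<le> cmp x"
    using b by (auto simp: MaxS_def LC_def)
  ultimately have "b = cmp y"
    using pom paraorthomodularD by blast
  with \<open>b \<le> cmp x\<close> show ?thesis
    by simp
qed

lemma impK_eq_top_if_is_meet_cmp_bot:
  assumes "x \<le> y" and x_y: "is_meet (cmp x) y bot"
  shows "impK cmp y x = {top}"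
proof -
  have cmp_y_le: "cmp y \<le> cmp x"
    using assms(1) by simp
  have MinS_top: "MinS (UC {cmp y, x}) = {top}"
    using UC_pair_eq_top_if_is_meet_bot[OF x_y] by (auto simp: MinS_def insert_commute)
  have "is_meet y (cmp y) bot"
    using x_y cmp_y_le unfolding is_meet_bot_iff by (meson order.trans)
  then have join_top: "is_join (cmp y) y top"
    by (simp add: is_join_iff_is_meet_cmp)
  have "s = top" if "s \<in> impK cmp y x" for s
  proof -
    from that obtain a b t u m where a: "a \<in> MaxS (LC {cmp y, x})"
      and b: "b \<in> MaxS (LC {cmp y, cmp x})" and t: "is_join a b t"
      and u: "u \<in> MinS (UC {cmp y, x})" and m: "is_meet y u m" and s: "is_join t m s"
      unfolding mem_impK_iff by blast
    have "b = cmp y"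
      using b cmp_y_le by (simp add: MaxS_LC_pair_of_le)
    moreover have "a \<le> cmp y"
      using a by (auto simp: MaxS_def LC_def)
    ultimately have "t = cmp y"
      using t by (metis is_join_of_le is_join_unique)
    moreover have "m = y"
      using u m MinS_top by (simp add: is_meet_top_iff)
    ultimately have "is_join (cmp y) y s"
      using s by simp
    then show "s = top"
      using join_top by (rule is_join_unique)
  qed
  with impK_not_empty show ?thesis
    by blast
qed

lemma paraorthomodular_if_impK_eq_top_imp_le:
  assumes "\<forall>x y. impK cmp x y = {top} \<longrightarrow> x \<le> y"
  shows "paraorthomodular cmp"
  unfolding paraorthomodular_def
proof (intro allI impI, elim conjE)
  fix x y assume "x \<le> y" "is_meet (cmp x) y bot"
  then have "impK cmp y x = {top}"
    by (rule impK_eq_top_if_is_meet_cmp_bot)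
  with assms \<open>x \<le> y\<close> show "x = y"
    by (blast intro: order.antisym)
qed

end

theorem theorem5:
  fixes cmp :: "'a::{order_bot,order_top} \<Rightarrow> 'a"
  assumes "antitone_involution cmp"
    and "orthogonal cmp"
    and "lub_complete TYPE('a)"
  shows "(paraorthomodular cmp \<longleftrightarrow> (\<forall>x y. impK cmp x y = {top} \<longrightarrow> x \<le> y))
       \<and> (paraorthomodular cmp \<longleftrightarrow> (\<forall>x y. impN cmp x y = {top} \<longrightarrow> x \<le> y))"
proof -
  interpret orthogonal_lub_complete_poset cmp
    using assms by unfold_locales
  have "paraorthomodular cmp \<longleftrightarrow> (\<forall>x y. impK cmp x y = {top} \<longrightarrow> x \<le> y)"
    using le_if_impK_eq_top paraorthomodular_if_impK_eq_top_imp_le by blast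
  then show ?thesis
    using impN_eq_top_imp_le_iff by blast
qed

end
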